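(* The map $f \mapsto C^{\wedge}(f)$, defined on the set $\mathbb{N}_0[\mathbb{R} \times \mathbb{R}_{>0}]$ of barcodes, is one-to-one.
   Context: A barcode is a finite formal sum $f = \sum_{i=1}^n x^{\alpha_i}y^{\ell_i}$ with $n\ge 0$, $\alpha_i \in \mathbb{R}$, $\ell_i \in \mathbb{R}_{>0}$ (i.e. a finite multiset of pairs $(\alpha_i,\ell_i)$, written as an element of the monoid semiring $\mathbb{N}_0[\mathbb{R}\times\mathbb{R}_{>0}]$ with indeterminates $x,y$ and real exponents). Its $p$-th exterior power ($p\ge1$) is the barcode $f^{\wedge p} = \sum_{1\le i_1<\cdots<i_p\le n} x^{\alpha_{i_1}+\cdots+\alpha_{i_p}}y^{\min\{\ell_{i_1},\ldots,\ell_{i_p}\}}$ (zero if $p>n$). Set $B(f) = \sum_i x^{\alpha_i}$, $D(f) = \sum_i x^{\alpha_i+\ell_i}$, and the critical series $C(f) = B(f)-D(f) \in \mathbb{Z}[\mathbb{R}]$ (finite integer combinations of $x^g$, $g\in\mathbb{R}$). The exterior critical series of $f$ is $C^{\wedge}(f) = \sum_{p=1}^{\infty} C(f^{\wedge p})z^p$, with $z$ a further indeterminate (a finite sum). *)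

theory Defs
  imports Complex_Main "HOL-Library.Multiset" "HOL-Library.Product_Lexorder"
begin

(* A barcode: finite multiset of bars (alpha, ell) with ell > 0.
   Element of N_0[R x R_{>0}]. *)
type_synonym barcode = "(real \<times> real) multiset"

definition is_barcode :: "barcode \<Rightarrow> bool" where
  "is_barcode f \<longleftrightarrow> (\<forall>b \<in># f. snd b > 0)"

(* p-th exterior power: enumerate the bars of f as a list xs (any enumeration;
   we take the sorted one), and sum over p-element index sets
   {i_1 < ... < i_p} the bar (alpha_{i_1}+...+alpha_{i_p}, min ell_{i_j}). *)
definition ext_pow :: "barcode \<Rightarrow> nat \<Rightarrow> barcode" where
  "ext_pow f p =
     (let xs = sorted_list_of_multiset f in
      \<Sum>S \<in> {S. S \<subseteq> {..<length xs} \<and> card S = p}.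
        {# (\<Sum>i\<in>S. fst (xs ! i), Min ((\<lambda>i. snd (xs ! i)) ` S)) #})"

(* Elements of Z[R] as finitely supported functions real => int
   (coefficient of x^g). *)
definition birth :: "barcode \<Rightarrow> real \<Rightarrow> int" where
  "birth f g = int (count (image_mset fst f) g)"

definition death :: "barcode \<Rightarrow> real \<Rightarrow> int" where
  "death f g = int (count (image_mset (\<lambda>(a, l). a + l) f) g)"

definition crit :: "barcode \<Rightarrow> real \<Rightarrow> int" where
  "crit f g = birth f g - death f g"

(* exterior critical series: coefficient of z^p x^g; the z^0 coefficient is 0 *)
definition ext_crit :: "barcode \<Rightarrow> nat \<Rightarrow> real \<Rightarrow> int" where
  "ext_crit f p g = (if p \<ge> 1 then crit (ext_pow f p) g else 0)"

end

theory Submission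
  imports Defs
begin

(* Index the bars by a finite set I, bar i being v i = (alpha_i, ell_i), and raise all births
   by a shift c smaller than every length. In the p-th exterior power no death lies at or below
   c plus the least sum of p births, so that is the lowest point where the critical series is
   nonzero. These least p-sums, for all p, determine the multiset of births; subtracting the
   births from the critical series leaves the deaths, and the top exterior power reveals the
   minimal length m. With births raised by m, a p-subset containing a bar of length m is born
   and dies at the same point, so deleting the bars of length m leaves the critical series
   unchanged. Induction recovers the longer bars, and the births left over belong to bars of
   length m. *)

type_synonym 'a bars = "'a \<Rightarrow> real \<times> real"

definition subsets_card :: "'a set \<Rightarrow> nat \<Rightarrow> 'a set set" where
  "subsets_card I p = {S. S \<subseteq> I \<and> card S = p}"

definition birth_sum :: "'a bars \<Rightarrow> 'a set \<Rightarrow> real" where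
  "birth_sum v S = (\<Sum>i\<in>S. fst (v i))"

definition length_min :: "'a bars \<Rightarrow> 'a set \<Rightarrow> real" where
  "length_min v S = Min ((\<lambda>i. snd (v i)) ` S)"

definition birth_count :: "real \<Rightarrow> 'a set \<Rightarrow> 'a bars \<Rightarrow> nat \<Rightarrow> real \<Rightarrow> nat" where
  "birth_count c I v p x = card {S \<in> subsets_card I p. birth_sum v S + c = x}"

definition death_count :: "'a set \<Rightarrow> 'a bars \<Rightarrow> nat \<Rightarrow> real \<Rightarrow> nat" where
  "death_count I v p x = card {S \<in> subsets_card I p. birth_sum v S + length_min v S = x}"

(* crit_count 0 I v p g is the coefficient of z^p x^g in the exterior critical series of the
   barcode with bars v i, i \<in> I; a shift c raises every birth by c and keeps the deaths. *)
definition crit_count :: "real \<Rightarrow> 'a set \<Rightarrow> 'a bars \<Rightarrow> nat \<Rightarrow> real \<Rightarrow> int" where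
  "crit_count c I v p x = int (birth_count c I v p x) - int (death_count I v p x)"

definition min_birth_sum :: "'a set \<Rightarrow> 'a bars \<Rightarrow> nat \<Rightarrow> real" where
  "min_birth_sum I v p = Min (birth_sum v ` subsets_card I p)"

abbreviation birth_mset :: "'a set \<Rightarrow> 'a bars \<Rightarrow> real multiset" where
  "birth_mset I v \<equiv> image_mset (\<lambda>i. fst (v i)) (mset_set I)"

lemma finite_subsets_card [simp]: "finite I \<Longrightarrow> finite (subsets_card I p)"
  unfolding subsets_card_def by (rule finite_subset[of _ "Pow I"]) auto

lemma subsets_cardD:
  "S \<in> subsets_card I p \<Longrightarrow> finite I \<Longrightarrow> S \<subseteq> I \<and> finite S \<and> card S = p"
  unfolding subsets_card_def by (auto intro: finite_subset)

lemma subsets_card_eq_empty_iff: "finite I \<Longrightarrow> subsets_card I p = {} \<longleftrightarrow> card I < p"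
  unfolding subsets_card_def
  by (metis (mono_tags, lifting) Collect_empty_eq card_mono not_le obtain_subset_with_card_n)

lemma subsets_card_card: "finite I \<Longrightarrow> subsets_card I (card I) = {I}"
  unfolding subsets_card_def using card_subset_eq by blast

lemma subsets_card_0: "finite I \<Longrightarrow> subsets_card I 0 = {{}}"
  unfolding subsets_card_def by (auto simp: card_eq_0_iff dest: finite_subset)

lemma card_subsets_card_remove:
  assumes "finite I" "i \<in> I" "0 < p"
  shows "card {S \<in> subsets_card I p. P S} = card {S \<in> subsets_card (I - {i}) p. P S}
     + card {T \<in> subsets_card (I - {i}) (p - 1). P (insert i T)}"
proof -
  let ?A = "{S \<in> subsets_card (I - {i}) p. P S}"
  let ?B = "{T \<in> subsets_card (I - {i}) (p - 1). P (insert i T)}"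
  have "{S \<in> subsets_card I p. P S} = ?A \<union> insert i ` ?B"
  proof (intro set_eqI iffI)
    fix S assume S: "S \<in> {S \<in> subsets_card I p. P S}"
    then have "finite S" using subsets_cardD assms(1) by blast
    then show "S \<in> ?A \<union> insert i ` ?B"
      using S assms
      by (cases "i \<in> S") (auto simp: subsets_card_def image_iff insert_absorb intro!: exI[of _ "S - {i}"])
  next
    fix S assume "S \<in> ?A \<union> insert i ` ?B"
    then show "S \<in> {S \<in> subsets_card I p. P S}"
      using assms finite_subset[of _ "I - {i}"]
      by (auto simp: subsets_card_def card_insert_if)
  qed
  moreover have "?A \<inter> insert i ` ?B = {}"
    unfolding subsets_card_def by auto
  moreover have "inj_on (insert i) ?B"
    unfolding subsets_card_def inj_on_def by auto
  ultimately show ?thesis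
    using assms(1) by (simp add: card_Un_disjoint card_image)
qed

lemma card_subsets_card_split_subset:
  assumes "finite I" "U \<subseteq> I"
  shows "card {S \<in> subsets_card I p. P S}
     = card {S \<in> subsets_card U p. P S} + card {S \<in> subsets_card I p. \<not> S \<subseteq> U \<and> P S}"
proof -
  have "{S \<in> subsets_card I p. P S}
      = {S \<in> subsets_card U p. P S} \<union> {S \<in> subsets_card I p. \<not> S \<subseteq> U \<and> P S}"
    using assms unfolding subsets_card_def by auto
  moreover have "{S \<in> subsets_card U p. P S} \<inter> {S \<in> subsets_card I p. \<not> S \<subseteq> U \<and> P S} = {}"
    unfolding subsets_card_def by auto
  moreover have "finite U" using assms finite_subset by auto
  ultimately show ?thesis
    using assms(1) by (simp add: card_Un_disjoint)
qed

section \<open>Least sums of births\<close>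

lemma min_birth_sum_in:
  "finite I \<Longrightarrow> p \<le> card I \<Longrightarrow> min_birth_sum I v p \<in> birth_sum v ` subsets_card I p"
  unfolding min_birth_sum_def by (simp add: subsets_card_eq_empty_iff)

lemma min_birth_sum_le:
  "finite I \<Longrightarrow> S \<in> subsets_card I p \<Longrightarrow> min_birth_sum I v p \<le> birth_sum v S"
  unfolding min_birth_sum_def by simp

lemma min_birth_sum_0: "finite I \<Longrightarrow> min_birth_sum I v 0 = 0"
  unfolding min_birth_sum_def by (simp add: subsets_card_0 birth_sum_def)

lemma birth_sum_insert: "finite S \<Longrightarrow> i \<notin> S \<Longrightarrow> birth_sum v (insert i S) = fst (v i) + birth_sum v S"
  unfolding birth_sum_def by simp

lemma min_birth_sum_remove_min:
  assumes fin: "finite I" and i: "i \<in> I" "\<forall>j\<in>I. fst (v i) \<le> fst (v j)"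
    and p: "0 < p" "p \<le> card I"
  shows "min_birth_sum I v p = fst (v i) + min_birth_sum (I - {i}) v (p - 1)"
  unfolding min_birth_sum_def[of I]
proof (rule Min_eqI)
  show "finite (birth_sum v ` subsets_card I p)" using fin by simp
next
  fix y assume "y \<in> birth_sum v ` subsets_card I p"
  then obtain S where S: "S \<in> subsets_card I p" "y = birth_sum v S" by auto
  then have SI: "S \<subseteq> I" "finite S" "card S = p" using subsets_cardD fin by blast+
  then obtain j where j: "j \<in> S" "i \<in> S \<longrightarrow> j = i"
    using p(1) by (cases "i \<in> S") (auto simp: card_gt_0_iff)
  have "S - {j} \<in> subsets_card (I - {i}) (p - 1)"
    using SI j unfolding subsets_card_def by auto
  then have "min_birth_sum (I - {i}) v (p - 1) \<le> birth_sum v (S - {j})"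
    using fin by (simp add: min_birth_sum_le)
  moreover have "birth_sum v S = fst (v j) + birth_sum v (S - {j})"
    using j(1) SI(2) birth_sum_insert[of "S - {j}" j v] by (simp add: insert_absorb)
  moreover have "fst (v i) \<le> fst (v j)" using i j SI by auto
  ultimately show "fst (v i) + min_birth_sum (I - {i}) v (p - 1) \<le> y" using S(2) by simp
next
  have "p - 1 \<le> card (I - {i})" using p i fin by simp
  then obtain T where T: "T \<in> subsets_card (I - {i}) (p - 1)"
      "birth_sum v T = min_birth_sum (I - {i}) v (p - 1)"
    using min_birth_sum_in[of "I - {i}" "p - 1" v] fin by force
  then have "T \<subseteq> I - {i}" "finite T" "card T = p - 1" using subsets_cardD fin by blast+
  moreover have "i \<notin> T" using \<open>T \<subseteq> I - {i}\<close> by blast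
  ultimately have "insert i T \<in> subsets_card I p" "birth_sum v (insert i T) = fst (v i) + birth_sum v T"
    using i p by (auto simp: subsets_card_def birth_sum_insert)
  then show "fst (v i) + min_birth_sum (I - {i}) v (p - 1) \<in> birth_sum v ` subsets_card I p"
    using T(2) by (metis image_eqI)
qed

lemma birth_mset_eq_if_min_birth_sum_eq:
  assumes "finite I" "finite I'" "card I = card I'"
    and "\<And>p. 0 < p \<Longrightarrow> p \<le> card I \<Longrightarrow> min_birth_sum I v p = min_birth_sum I' v' p"
  shows "birth_mset I v = birth_mset I' v'"
  using assms
proof (induction "card I" arbitrary: I I')
  case 0
  then show ?case by auto
next
  case (Suc n)
  then have ne: "I \<noteq> {}" "I' \<noteq> {}" by auto
  obtain i where i: "i \<in> I" "\<forall>j\<in>I. fst (v i) \<le> fst (v j)"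
    using arg_min_if_finite[OF Suc.prems(1) ne(1), of "\<lambda>j. fst (v j)"] by (meson not_le)
  obtain i' where i': "i' \<in> I'" "\<forall>j\<in>I'. fst (v' i') \<le> fst (v' j)"
    using arg_min_if_finite[OF Suc.prems(2) ne(2), of "\<lambda>j. fst (v' j)"] by (meson not_le)
  have rec: "min_birth_sum I v p = fst (v i) + min_birth_sum (I - {i}) v (p - 1)"
    "min_birth_sum I' v' p = fst (v' i') + min_birth_sum (I' - {i'}) v' (p - 1)"
    if "0 < p" "p \<le> Suc n" for p
    using min_birth_sum_remove_min[OF Suc.prems(1) i that(1)]
      min_birth_sum_remove_min[OF Suc.prems(2) i' that(1)] that(2) Suc.hyps(2) Suc.prems(3)
    by simp_all
  have smallest_birth: "fst (v i) = fst (v' i')"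
    using rec[of 1] Suc.prems(1,2,4) Suc.hyps(2) by (simp add: min_birth_sum_0)
  have "birth_mset (I - {i}) v = birth_mset (I' - {i'}) v'"
  proof (rule Suc.hyps(1))
    fix q assume q: "0 < q" "q \<le> card (I - {i})"
    then have "q < Suc n" using Suc.hyps(2) Suc.prems(1) i(1) by simp
    then show "min_birth_sum (I - {i}) v q = min_birth_sum (I' - {i'}) v' q"
      using rec[of "Suc q"] Suc.prems(4)[of "Suc q"] Suc.hyps(2) smallest_birth by simp
  qed (use Suc.hyps(2) Suc.prems i i' in auto)
  then show ?case
    using smallest_birth mset_set.remove[OF Suc.prems(1) i(1)] mset_set.remove[OF Suc.prems(2) i'(1)] by simp
qed

lemma birth_count_0:
  assumes "finite I" shows "birth_count c I v 0 x = (if c = x then 1 else 0)"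
proof -
  have "{S \<in> {{}}. birth_sum v S + c = x} = (if c = x then {{}} else {})"
    by (auto simp: birth_sum_def)
  then show ?thesis unfolding birth_count_def subsets_card_0[OF assms] by simp
qed

lemma birth_count_remove:
  assumes "finite I" "i \<in> I" "0 < p"
  shows "birth_count c I v p x
     = birth_count c (I - {i}) v p x + birth_count c (I - {i}) v (p - 1) (x - fst (v i))"
proof -
  have "{T \<in> subsets_card (I - {i}) (p - 1). birth_sum v (insert i T) + c = x}
      = {T \<in> subsets_card (I - {i}) (p - 1). birth_sum v T + c = x - fst (v i)}"
  proof (rule Collect_cong, rule conj_cong)
    fix T assume "T \<in> subsets_card (I - {i}) (p - 1)"
    then have "finite T" "i \<notin> T" using subsets_cardD assms(1) by blast+
    then show "birth_sum v (insert i T) + c = x \<longleftrightarrow> birth_sum v T + c = x - fst (v i)"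
      by (simp add: birth_sum_insert) linarith
  qed simp
  then show ?thesis
    unfolding birth_count_def card_subsets_card_remove[OF assms] by simp
qed

lemma birth_count_eq_if_birth_mset_eq:
  assumes "finite I" "finite I'" "birth_mset I v = birth_mset I' v'"
  shows "birth_count c I v p x = birth_count c I' v' p x"
  using assms
proof (induction "card I" arbitrary: I I' p x)
  case 0
  then have "I = {}" "I' = {}" by (auto simp: mset_set_empty_iff)
  then show ?case
    by (cases "p = 0 \<and> c = x") (auto simp: birth_count_def subsets_card_def birth_sum_def cong: conj_cong)
next
  case (Suc n)
  then obtain i where i: "i \<in> I" by fastforce
  then have "fst (v i) \<in># birth_mset I' v'"
    using Suc.prems by (metis finite_set_mset_mset_set image_eqI set_image_mset)
  then obtain i' where i': "i' \<in> I'" "fst (v' i') = fst (v i)" using Suc.prems(2) by auto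
  have "birth_mset (I - {i}) v = birth_mset (I' - {i'}) v'"
    using Suc.prems(3) i' mset_set.remove[OF Suc.prems(1) i] mset_set.remove[OF Suc.prems(2) i'(1)]
    by simp
  then have IH: "birth_count c (I - {i}) v q y = birth_count c (I' - {i'}) v' q y" for q y
    using Suc.hyps Suc.prems(1,2) i by simp
  show ?case
  proof (cases "p = 0")
    case True
    then show ?thesis by (simp add: birth_count_0 Suc.prems)
  next
    case False
    then show ?thesis
      using birth_count_remove[OF Suc.prems(1) i] birth_count_remove[OF Suc.prems(2) i'(1)] IH i'(2)
      by simp
  qed
qed

lemma crit_count_eq_iff_death_count_eq:
  assumes "finite I" "finite I'" "birth_mset I v = birth_mset I' v'"
  shows "crit_count c I v p x = crit_count c I' v' p x \<longleftrightarrow> death_count I v p x = death_count I' v' p x"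
  using birth_count_eq_if_birth_mset_eq[OF assms] unfolding crit_count_def by simp

lemma death_count_card:
  assumes "finite I"
  shows "death_count I v (card I) x = (if birth_sum v I + length_min v I = x then 1 else 0)"
proof -
  have "{S \<in> {I}. birth_sum v S + length_min v S = x}
      = (if birth_sum v I + length_min v I = x then {I} else {})"
    by auto
  then show ?thesis unfolding death_count_def subsets_card_card[OF assms] by simp
qed

section \<open>The lowest critical point\<close>

lemma death_count_eq_0_below:
  assumes "finite I" "0 < p" "\<forall>i\<in>I. c < snd (v i)" "x \<le> c + min_birth_sum I v p"
  shows "death_count I v p x = 0"
proof -
  have "birth_sum v S + length_min v S \<noteq> x" if S: "S \<in> subsets_card I p" for S
  proof -
    have "S \<subseteq> I" "finite S" "S \<noteq> {}" using subsets_cardD[OF S assms(1)] assms(2) by auto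
    then have "c < length_min v S"
      using assms(3) unfolding length_min_def by (subst Min_gr_iff) auto
    moreover have "min_birth_sum I v p \<le> birth_sum v S" using min_birth_sum_le[OF assms(1) S] .
    ultimately show ?thesis using assms(4) by linarith
  qed
  then show ?thesis unfolding death_count_def by (auto simp: card_eq_0_iff)
qed

lemma crit_count_below_min_birth_sum:
  assumes "finite I" "0 < p" "\<forall>i\<in>I. c < snd (v i)" "x < c + min_birth_sum I v p"
  shows "crit_count c I v p x = 0"
proof -
  have "birth_count c I v p x = 0"
    using assms(4) min_birth_sum_le[OF assms(1), of _ p v] unfolding birth_count_def by (force simp: card_eq_0_iff)
  then show ?thesis
    using death_count_eq_0_below[OF assms(1-3)] assms(4) unfolding crit_count_def by simp
qed

lemma crit_count_at_min_birth_sum_pos: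
  assumes "finite I" "0 < p" "p \<le> card I" "\<forall>i\<in>I. c < snd (v i)"
  shows "0 < crit_count c I v p (c + min_birth_sum I v p)"
proof -
  obtain S where "S \<in> subsets_card I p" "birth_sum v S = min_birth_sum I v p"
    using min_birth_sum_in[OF assms(1,3), of v] by force
  then have "0 < birth_count c I v p (c + min_birth_sum I v p)"
    unfolding birth_count_def using assms(1) by (auto simp: card_gt_0_iff)
  then show ?thesis
    using death_count_eq_0_below[OF assms(1,2,4)] unfolding crit_count_def by simp
qed

lemma crit_count_beyond_card: "finite I \<Longrightarrow> card I < p \<Longrightarrow> crit_count c I v p x = 0"
  by (simp add: crit_count_def birth_count_def death_count_def subsets_card_eq_empty_iff[THEN iffD2])

lemma card_le_if_crit_count_eq:
  assumes "finite I" "finite I'" "\<forall>i\<in>I'. c < snd (v' i)"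
    and eq: "\<And>p x. 0 < p \<Longrightarrow> crit_count c I v p x = crit_count c I' v' p x"
  shows "card I' \<le> card I"
proof (rule ccontr)
  assume less: "\<not> card I' \<le> card I"
  let ?x = "c + min_birth_sum I' v' (card I')"
  have "0 < crit_count c I' v' (card I') ?x"
    using crit_count_at_min_birth_sum_pos[OF assms(2) _ order_refl assms(3)] less by simp
  moreover have "crit_count c I v (card I') ?x = 0"
    using crit_count_beyond_card[OF assms(1)] less by simp
  ultimately show False using eq[of "card I'" ?x] less by simp
qed

lemma min_birth_sum_le_if_crit_count_eq:
  assumes "finite I" "finite I'" "\<forall>i\<in>I. c < snd (v i)" "\<forall>i\<in>I'. c < snd (v' i)"
    and "0 < p" "p \<le> card I'"
    and eq: "\<And>x. crit_count c I v p x = crit_count c I' v' p x"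
  shows "min_birth_sum I v p \<le> min_birth_sum I' v' p"
proof (rule ccontr)
  assume "\<not> ?thesis"
  then have "crit_count c I v p (c + min_birth_sum I' v' p) = 0"
    using crit_count_below_min_birth_sum[OF assms(1,5,3)] by simp
  then show False
    using crit_count_at_min_birth_sum_pos[OF assms(2,5,6,4)] eq by simp
qed

lemma birth_mset_eq_if_crit_count_eq:
  assumes "finite I" "finite I'" "\<forall>i\<in>I. c < snd (v i)" "\<forall>i\<in>I'. c < snd (v' i)"
    and eq: "\<And>p x. 0 < p \<Longrightarrow> crit_count c I v p x = crit_count c I' v' p x"
  shows "birth_mset I v = birth_mset I' v'"
proof -
  have eq': "\<And>p x. 0 < p \<Longrightarrow> crit_count c I' v' p x = crit_count c I v p x"
    using eq by simp
  have card: "card I = card I'"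
    using card_le_if_crit_count_eq[OF assms(1,2,4) eq] card_le_if_crit_count_eq[OF assms(2,1,3) eq']
    by simp
  show ?thesis
  proof (rule birth_mset_eq_if_min_birth_sum_eq[OF assms(1,2) card])
    fix p assume p: "0 < p" "p \<le> card I"
    show "min_birth_sum I v p = min_birth_sum I' v' p"
    proof (rule antisym)
      show "min_birth_sum I v p \<le> min_birth_sum I' v' p"
        using min_birth_sum_le_if_crit_count_eq[OF assms(1-4) p(1)] p(2) card eq[OF p(1)] by simp
      show "min_birth_sum I' v' p \<le> min_birth_sum I v p"
        using min_birth_sum_le_if_crit_count_eq[OF assms(2,1,4,3) p] eq'[OF p(1)] by simp
    qed
  qed
qed

section \<open>Removing the shortest bars\<close>

lemma length_min_eq_if_death_count_eq:
  assumes "finite I" "finite I'" "birth_mset I v = birth_mset I' v'"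
    and eq: "\<And>x. death_count I v (card I) x = death_count I' v' (card I) x"
  shows "length_min v I = length_min v' I'"
proof -
  have "card I = card I'" by (metis assms(3) size_image_mset size_mset_set)
  moreover have "birth_sum v I = birth_sum v' I'"
    using assms(3) unfolding birth_sum_def sum_unfold_sum_mset
    by (simp add: image_mset.compositionality o_def)
  ultimately show ?thesis
    using eq[of "birth_sum v I + length_min v I"]
      death_count_card[OF assms(1)] death_count_card[OF assms(2)]
    by (auto split: if_splits)
qed

lemma crit_count_restrict_longer:
  assumes "finite I" "\<forall>i\<in>I. m \<le> snd (v i)"
  shows "crit_count m I v p x = crit_count m {i \<in> I. m < snd (v i)} v p x"
proof -
  define U where "U = {i \<in> I. m < snd (v i)}"
  have U: "U \<subseteq> I" unfolding U_def by auto
  have "length_min v S = m" if S: "S \<in> subsets_card I p" "\<not> S \<subseteq> U" for S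
  proof -
    obtain j where j: "j \<in> S" "j \<notin> U" using S(2) by blast
    have SI: "S \<subseteq> I" "finite S" using subsets_cardD[OF S(1) assms(1)] by auto
    then have "snd (v j) = m" using j assms(2) unfolding U_def by force
    then show ?thesis
      unfolding length_min_def using SI j(1) assms(2) by (intro Min_eqI) force+
  qed
  then have "{S \<in> subsets_card I p. \<not> S \<subseteq> U \<and> birth_sum v S + length_min v S = x}
      = {S \<in> subsets_card I p. \<not> S \<subseteq> U \<and> birth_sum v S + m = x}"
    by blast
  moreover have "death_count I v p x = death_count U v p x
      + card {S \<in> subsets_card I p. \<not> S \<subseteq> U \<and> birth_sum v S + length_min v S = x}"
    unfolding death_count_def by (rule card_subsets_card_split_subset[OF assms(1) U])
  moreover have "birth_count m I v p x = birth_count m U v p x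
      + card {S \<in> subsets_card I p. \<not> S \<subseteq> U \<and> birth_sum v S + m = x}"
    unfolding birth_count_def by (rule card_subsets_card_split_subset[OF assms(1) U])
  ultimately show ?thesis unfolding crit_count_def U_def by simp
qed

lemma mset_bars_split_at_length:
  assumes "finite I" "\<forall>i\<in>I. m \<le> snd (v i)"
  shows "image_mset v (mset_set I) = image_mset v (mset_set {i \<in> I. m < snd (v i)})
    + image_mset (\<lambda>a. (a, m)) (birth_mset I v - birth_mset {i \<in> I. m < snd (v i)} v)"
proof -
  define U where "U = {i \<in> I. m < snd (v i)}"
  have split: "mset_set I = mset_set U + mset_set (I - U)"
    using assms(1) mset_set_Union[of U "I - U"] unfolding U_def by (simp add: Un_absorb1)
  have "image_mset v (mset_set (I - U)) = image_mset (\<lambda>i. (fst (v i), m)) (mset_set (I - U))"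
  proof (rule image_mset_cong)
    fix i assume "i \<in># mset_set (I - U)"
    then have "snd (v i) = m" using assms U_def by (auto simp: not_less intro: antisym)
    then show "v i = (fst (v i), m)" by (metis prod.collapse)
  qed
  then show ?thesis
    unfolding U_def[symmetric] split by (simp add: image_mset.compositionality o_def)
qed

lemma crit_count_longer_bars_eq:
  assumes fin: "finite I" "finite I'"
    and le: "\<forall>i\<in>I. m \<le> snd (v i)" "\<forall>i\<in>I'. m \<le> snd (v' i)"
    and births: "birth_mset I v = birth_mset I' v'"
    and eq: "\<And>p x. 0 < p \<Longrightarrow> crit_count 0 I v p x = crit_count 0 I' v' p x"
  defines "U \<equiv> {i \<in> I. m < snd (v i)}" and "U' \<equiv> {i \<in> I'. m < snd (v' i)}"
  shows "birth_mset U v = birth_mset U' v'"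
    and "\<And>p x. 0 < p \<Longrightarrow> crit_count 0 U v p x = crit_count 0 U' v' p x"
proof -
  have finU: "finite U" "finite U'" using fin unfolding U_def U'_def by auto
  have "crit_count m U v p x = crit_count m U' v' p x" if "0 < p" for p x
  proof -
    have "crit_count m I v p x = crit_count m I' v' p x"
      using eq[OF that] unfolding crit_count_eq_iff_death_count_eq[OF fin births] .
    then show ?thesis
      using crit_count_restrict_longer[OF fin(1) le(1)] crit_count_restrict_longer[OF fin(2) le(2)]
      unfolding U_def U'_def by simp
  qed
  moreover show births_U: "birth_mset U v = birth_mset U' v'"
    by (rule birth_mset_eq_if_crit_count_eq[OF finU _ _ calculation]) (simp_all add: U_def U'_def)
  ultimately show "crit_count 0 U v p x = crit_count 0 U' v' p x" if "0 < p" for p x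
    using that unfolding crit_count_eq_iff_death_count_eq[OF finU births_U] by blast
qed

lemma mset_bars_eq_if_crit_count_eq:
  assumes "finite I" "finite I'" "\<forall>i\<in>I. 0 < snd (v i)" "\<forall>i\<in>I'. 0 < snd (v' i)"
    and "\<And>p x. 0 < p \<Longrightarrow> crit_count 0 I v p x = crit_count 0 I' v' p x"
  shows "image_mset v (mset_set I) = image_mset v' (mset_set I')"
  using assms
proof (induction "card I" arbitrary: I I' rule: less_induct)
  case less
  note fin = less.prems(1,2) and eq = less.prems(5)
  have births: "birth_mset I v = birth_mset I' v'"
    using birth_mset_eq_if_crit_count_eq[OF less.prems] .
  show ?case
  proof (cases "I = {}")
    case True
    then show ?thesis using births fin(2) by (simp add: mset_set_empty_iff)
  next
    case False
    define m where "m = length_min v I"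
    have "death_count I v (card I) x = death_count I' v' (card I) x" for x
      using eq[of "card I" x] False fin(1)
      unfolding crit_count_eq_iff_death_count_eq[OF fin births] by (simp add: card_gt_0_iff)
    then have m': "m = length_min v' I'"
      unfolding m_def by (rule length_min_eq_if_death_count_eq[OF fin births])
    have le: "\<forall>i\<in>I. m \<le> snd (v i)" "\<forall>i\<in>I'. m \<le> snd (v' i)"
      using fin by (simp add: m_def length_min_def, simp add: m' length_min_def)
    have "m \<in> (\<lambda>i. snd (v i)) ` I" using fin(1) False unfolding m_def length_min_def by simp
    then have "card {i \<in> I. m < snd (v i)} < card I" using fin(1) by (intro psubset_card_mono) auto
    then have "image_mset v (mset_set {i \<in> I. m < snd (v i)})
        = image_mset v' (mset_set {i \<in> I'. m < snd (v' i)})"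
      using less.hyps crit_count_longer_bars_eq(2)[OF fin le births eq] fin less.prems(3,4) by simp
    then show ?thesis
      using mset_bars_split_at_length[OF fin(1) le(1)] mset_bars_split_at_length[OF fin(2) le(2)]
        births crit_count_longer_bars_eq(1)[OF fin le births eq] by simp
  qed
qed

lemma count_image_mset_sum_singletons:
  "finite A \<Longrightarrow> count (image_mset g (\<Sum>S\<in>A. {#h S#})) y = card {S \<in> A. g (h S) = y}"
proof (induction A rule: finite_induct)
  case (insert a A)
  have "{S \<in> insert a A. g (h S) = y}
      = (if g (h a) = y then insert a {S \<in> A. g (h S) = y} else {S \<in> A. g (h S) = y})"
    by auto
  then show ?case using insert by simp
qed simp

lemma crit_ext_pow_eq_crit_count:
  fixes f :: barcode
  defines "xs \<equiv> sorted_list_of_multiset f"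
  shows "crit (ext_pow f p) x = crit_count 0 {..<length xs} ((!) xs) p x"
proof -
  have pow: "ext_pow f p = (\<Sum>S\<in>subsets_card {..<length xs} p.
      {#(birth_sum ((!) xs) S, length_min ((!) xs) S)#})"
    unfolding ext_pow_def xs_def subsets_card_def birth_sum_def length_min_def Let_def by simp
  show ?thesis
    unfolding crit_def crit_count_def birth_def death_def pow
      count_image_mset_sum_singletons[OF finite_subsets_card[OF finite_lessThan]]
      birth_count_def death_count_def by simp
qed

lemma mset_nth_lessThan: "image_mset ((!) xs) (mset_set {..<length xs}) = mset xs"
proof -
  have "image_mset ((!) xs) (mset_set {..<length xs}) = mset (map ((!) xs) [0..<length xs])"
    by (simp add: mset_set_upto_eq_mset_upto)
  then show ?thesis by (simp add: map_nth)
qed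

theorem theorem7:
  shows "inj_on ext_crit {f. is_barcode f}"
proof (rule inj_onI)
  fix f f' assume "f \<in> {f. is_barcode f}" "f' \<in> {f. is_barcode f}" and eq: "ext_crit f = ext_crit f'"
  define xs xs' where "xs = sorted_list_of_multiset f" and "xs' = sorted_list_of_multiset f'"
  then have "mset xs = f" "mset xs' = f'" by simp_all
  then have "is_barcode (mset xs)" "is_barcode (mset xs')"
    using \<open>f \<in> {f. is_barcode f}\<close> \<open>f' \<in> {f. is_barcode f}\<close> by simp_all
  then have pos: "\<forall>i\<in>{..<length xs}. 0 < snd (xs ! i)" "\<forall>i\<in>{..<length xs'}. 0 < snd (xs' ! i)"
    by (auto simp: is_barcode_def)
  have "crit_count 0 {..<length xs} ((!) xs) p x = crit_count 0 {..<length xs'} ((!) xs') p x"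
    if "0 < p" for p x
    using fun_cong[OF fun_cong[OF eq, of p], of x] that
    unfolding ext_crit_def xs_def xs'_def crit_ext_pow_eq_crit_count by simp
  then have "mset xs = mset xs'"
    using mset_bars_eq_if_crit_count_eq[OF _ _ pos] by (simp add: mset_nth_lessThan)
  then show "f = f'" using \<open>mset xs = f\<close> \<open>mset xs' = f'\<close> by simp
qed

end
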